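(* Let $\alpha\ge1$ be an ordinal and let $\aleph$ be the cardinality of $\mathrm{Zigzag}_\alpha$. Then every questionable representation of $\mathrm{Zigzag}_\alpha$ has width at least $\aleph$.
   Context: Orders are partial orders. $\mathrm{Zigzag}_\alpha$ is the order on the disjoint elements $s_i,s'_i$ ($i<\alpha$) whose comparabilities are exactly: $s_i<s'_i$ for $i<\alpha$; $s_i<s'_{i+1}$ whenever $i+1<\alpha$; and $s_j<s'_i$ whenever $j<i<\alpha$ and $i$ is a limit ordinal. For an ordinal $j$, $\mathcal O_j=(O_k)_{k<j}$ is a sequence of orders; a word of length $\ell\le j$ is $(x_k)_{k<\ell}$ with $x_k\in\mathrm{Dom}(O_k)$. The question of words $X,Y$ is $(k,x_k,y_k)$ for the least $k<\min(\mathrm{len}X,\mathrm{len}Y)$ with $x_k\neq y_k$, if it exists. For $i<j$, $\mathrm{Next}(i,j,\mathcal O_j)$ is the partial order on words of length $\ell$, $i\le \ell<j$, with $X<Y$ iff their question $(k,x_k,y_k)$ exists and $x_k<y_k$ in $O_k$; otherwise incomparable. A questionable representation of an order $O$ is an injective $f$ into some $\mathrm{Next}(i,j,\mathcal O_j)$ with $f(x)<f(y)\iff x<y$; its width is the supremum of the cardinalities of the $\mathrm{Dom}(O_k)$, $k<j$. *)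

theory Defs
  imports Main
begin



text \<open>An ordinal \<open>\<beta>\<close> is represented as the initial segment \<open>{i. i < b}\<close> of a
  well-ordered type; ordinals below \<open>\<beta>\<close> are the elements \<open>i < b\<close>.\<close>

definition succ_of :: "'i::wellorder \<Rightarrow> 'i \<Rightarrow> bool" where
  "succ_of i i' \<longleftrightarrow> i < i' \<and> \<not> (\<exists>m. i < m \<and> m < i')"

definition is_limit :: "'i::wellorder \<Rightarrow> bool" where
  "is_limit i \<longleftrightarrow> (\<exists>m. m < i) \<and> \<not> (\<exists>m. succ_of m i)"

text \<open>Element \<open>(False, i)\<close> is \<open>s_i\<close>, element \<open>(True, i)\<close> is \<open>s'_i\<close>.\<close>

definition zigzag_dom :: "'i::wellorder \<Rightarrow> (bool \<times> 'i) set" where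
  "zigzag_dom a = UNIV \<times> {i. i < a}"

definition zigzag_less :: "'i::wellorder \<Rightarrow> (bool \<times> 'i) \<Rightarrow> (bool \<times> 'i) \<Rightarrow> bool" where
  "zigzag_less a p q \<longleftrightarrow>
     (\<exists>i i'. p = (False, i) \<and> q = (True, i') \<and> i < a \<and> i' < a \<and>
        (i' = i \<or> succ_of i i' \<or> (i < i' \<and> is_limit i')))"

definition strict_po :: "'a set \<Rightarrow> 'a rel \<Rightarrow> bool" where
  "strict_po D R \<longleftrightarrow> R \<subseteq> D \<times> D \<and> (\<forall>x. (x, x) \<notin> R) \<and> trans R"

text \<open>A sequence of orders \<open>(O_k)_{k<j}\<close> is given by domains \<open>D k\<close> and relations \<open>Ord k\<close>.
  A word of length \<open>l\<close> is a pair \<open>(l, x)\<close> with \<open>x k \<in> D k\<close> for \<open>k < l\<close> and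
  \<open>x k = undefined\<close> for \<open>k \<ge> l\<close> (canonical representative).\<close>

definition is_word :: "('k::wellorder \<Rightarrow> 'a set) \<Rightarrow> 'k \<Rightarrow> ('k \<times> ('k \<Rightarrow> 'a)) \<Rightarrow> bool" where
  "is_word D l w \<longleftrightarrow> fst w = l \<and> (\<forall>k. k < l \<longrightarrow> snd w k \<in> D k)
                      \<and> (\<forall>k. \<not> k < l \<longrightarrow> snd w k = undefined)"

definition next_dom :: "'k::wellorder \<Rightarrow> 'k \<Rightarrow> ('k \<Rightarrow> 'a set) \<Rightarrow> ('k \<times> ('k \<Rightarrow> 'a)) set" where
  "next_dom i j D = {w. \<exists>l. i \<le> l \<and> l < j \<and> is_word D l w}"

definition next_less :: "('k::wellorder \<Rightarrow> 'a rel) \<Rightarrow> ('k \<times> ('k \<Rightarrow> 'a)) \<Rightarrow> ('k \<times> ('k \<Rightarrow> 'a)) \<Rightarrow> bool" where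
  "next_less Ord X Y \<longleftrightarrow>
     (\<exists>k. k < fst X \<and> k < fst Y \<and> snd X k \<noteq> snd Y k
          \<and> (\<forall>m. m < k \<longrightarrow> snd X m = snd Y m)
          \<and> (snd X k, snd Y k) \<in> Ord k)"

definition questionable_rep ::
  "'z set \<Rightarrow> ('z \<Rightarrow> 'z \<Rightarrow> bool) \<Rightarrow> 'k::wellorder \<Rightarrow> 'k \<Rightarrow> ('k \<Rightarrow> 'a set) \<Rightarrow> ('k \<Rightarrow> 'a rel)
     \<Rightarrow> ('z \<Rightarrow> 'k \<times> ('k \<Rightarrow> 'a)) \<Rightarrow> bool" where
  "questionable_rep Z lessZ i j D Ord f \<longleftrightarrow>
     i < j \<and> (\<forall>k. k < j \<longrightarrow> strict_po (D k) (Ord k)) \<and>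
     inj_on f Z \<and> f ` Z \<subseteq> next_dom i j D \<and>
     (\<forall>x\<in>Z. \<forall>y\<in>Z. next_less Ord (f x) (f y) \<longleftrightarrow> lessZ x y)"

text \<open>The width \<open>sup_{k<j} |D k|\<close> is at least the cardinality \<open>|A|\<close>: no cardinal
  strictly below \<open>|A|\<close> (i.e. \<open>|C|\<close> with \<open>C\<close> a set of smaller cardinality) bounds all \<open>|D k|\<close>.\<close>
definition width_at_least :: "'k::wellorder \<Rightarrow> ('k \<Rightarrow> 'a set) \<Rightarrow> 'z set \<Rightarrow> bool" where
  "width_at_least j D A \<longleftrightarrow>
     (\<forall>C :: 'z set. ordLess2 (card_of C) (card_of A) \<longrightarrow> (\<exists>k. k < j \<and> ordLess2 (card_of C) (card_of (D k))))"

end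

theory Submission
  imports Defs
begin

text \<open>If \<open>x < y\<close> and \<open>x < w\<close> are decided at different positions of the words, then
  \<open>y\<close> and \<open>w\<close> are comparable, being decided at the smaller position. In the zigzag
  two upper (or two lower) elements are never comparable, so edges sharing a vertex are
  decided at the same position; as the zigzag is connected, a single position \<open>k\<^sub>0\<close>
  decides every comparability. All images then agree below \<open>k\<^sub>0\<close>, and two distinct
  elements with the same letter at \<open>k\<^sub>0\<close> would have the same neighbours, which
  never happens in the zigzag. Hence \<open>z \<mapsto> f(z)\<^sub>k\<^sub>0\<close> embeds the zigzag into
  \<open>Dom(O\<^sub>k\<^sub>0)\<close>.\<close>

definition next_less_at ::
  "('k::wellorder \<Rightarrow> 'a rel) \<Rightarrow> 'k \<times> ('k \<Rightarrow> 'a) \<Rightarrow> 'k \<times> ('k \<Rightarrow> 'a) \<Rightarrow> 'k \<Rightarrow> bool" where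
  "next_less_at Ord X Y k \<longleftrightarrow> k < fst X \<and> k < fst Y \<and> snd X k \<noteq> snd Y k
     \<and> (\<forall>m<k. snd X m = snd Y m) \<and> (snd X k, snd Y k) \<in> Ord k"

definition same_prefix :: "'k::wellorder \<Rightarrow> 'k \<times> ('k \<Rightarrow> 'a) \<Rightarrow> 'k \<times> ('k \<Rightarrow> 'a) \<Rightarrow> bool" where
  "same_prefix m X Y \<longleftrightarrow> m < fst X \<and> m < fst Y \<and> (\<forall>k<m. snd X k = snd Y k)"

lemma next_less_iff_next_less_at: "next_less Ord X Y \<longleftrightarrow> (\<exists>k. next_less_at Ord X Y k)"
  unfolding next_less_def next_less_at_def by blast

lemma same_prefix_sym: "same_prefix m X Y \<Longrightarrow> same_prefix m Y X"
  unfolding same_prefix_def by simp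

lemma same_prefix_trans: "same_prefix m X Y \<Longrightarrow> same_prefix m Y Z \<Longrightarrow> same_prefix m X Z"
  unfolding same_prefix_def by simp

lemma same_prefix_if_next_less_at: "next_less_at Ord X Y m \<Longrightarrow> same_prefix m X Y"
  unfolding same_prefix_def next_less_at_def by simp

lemma next_less_at_replace_left:
  assumes "next_less_at Ord X Y m" "same_prefix m X W" "snd W m = snd X m"
  shows "next_less_at Ord W Y m"
  using assms unfolding next_less_at_def same_prefix_def by simp

lemma next_less_at_replace_right:
  assumes "next_less_at Ord X Y m" "same_prefix m Y W" "snd W m = snd Y m"
  shows "next_less_at Ord X W m"
  using assms unfolding next_less_at_def same_prefix_def by simp

lemma next_less_at_common_lower:
  assumes "next_less_at Ord X Y k" "next_less_at Ord X W k'"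
    and "\<not> next_less Ord W Y" "\<not> next_less Ord Y W"
  shows "k = k'"
proof (rule ccontr)
  assume "k \<noteq> k'"
  then have "next_less_at Ord W Y k \<or> next_less_at Ord Y W k'"
    using assms(1,2) unfolding next_less_at_def
    by (metis (no_types, lifting) linorder_neqE order.strict_trans)
  then show False using assms(3,4) unfolding next_less_iff_next_less_at by blast
qed

lemma next_less_at_common_upper:
  assumes "next_less_at Ord Y X k" "next_less_at Ord W X k'"
    and "\<not> next_less Ord W Y" "\<not> next_less Ord Y W"
  shows "k = k'"
proof (rule ccontr)
  assume "k \<noteq> k'"
  then have "next_less_at Ord Y W k \<or> next_less_at Ord W Y k'"
    using assms(1,2) unfolding next_less_at_def
    by (metis (no_types, lifting) linorder_neqE order.strict_trans)
  then show False using assms(3,4) unfolding next_less_iff_next_less_at by blast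
qed

lemma zigzag_dom_iff: "x \<in> zigzag_dom a \<longleftrightarrow> snd x < a"
  unfolding zigzag_dom_def by (cases x) auto

lemma zigzag_less_dest:
  "zigzag_less a x y \<Longrightarrow> \<exists>p q. x = (False, p) \<and> y = (True, q) \<and> p \<le> q \<and> q < a"
  unfolding zigzag_less_def succ_of_def by auto

lemma zigzag_less_diag: "t < a \<Longrightarrow> zigzag_less a (False, t) (True, t)"
  unfolding zigzag_less_def by auto

lemma zigzag_less_lower_neighbour:
  assumes "m < q" "q < a"
  shows "\<exists>p<q. zigzag_less a (False, p) (True, q)"
proof (cases "\<exists>p. succ_of p q")
  case True
  then show ?thesis using assms(2) unfolding zigzag_less_def succ_of_def by auto
next
  case False
  then have "is_limit q" using assms(1) unfolding is_limit_def by blast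
  then show ?thesis using assms unfolding zigzag_less_def by auto
qed

locale zigzag_rep =
  fixes a :: "'i::wellorder"
    and i j :: "'k::wellorder"
    and D :: "'k \<Rightarrow> 'a set"
    and Ord :: "'k \<Rightarrow> 'a rel"
    and f :: "bool \<times> 'i \<Rightarrow> 'k \<times> ('k \<Rightarrow> 'a)"
  assumes nonempty: "\<exists>m. m < a"
    and rep: "questionable_rep (zigzag_dom a) (zigzag_less a) i j D Ord f"
begin

lemma less_iff_next_less_at:
  "x \<in> zigzag_dom a \<Longrightarrow> y \<in> zigzag_dom a \<Longrightarrow>
     (\<exists>k. next_less_at Ord (f x) (f y) k) \<longleftrightarrow> zigzag_less a x y"
  using rep unfolding questionable_rep_def next_less_iff_next_less_at by blast

lemma next_less_at_if_less:
  assumes "zigzag_less a x y" obtains k where "next_less_at Ord (f x) (f y) k"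
  using assms less_iff_next_less_at zigzag_less_dest zigzag_dom_iff
  by (metis order.strict_trans1 snd_conv)

lemma not_next_less_same_side:
  "t < a \<Longrightarrow> u < a \<Longrightarrow> \<not> next_less Ord (f (b, t)) (f (b, u))"
  using less_iff_next_less_at[of "(b, t)" "(b, u)"] zigzag_less_dest
  unfolding next_less_iff_next_less_at zigzag_dom_iff by fastforce

lemma index_common_lower:
  assumes "zigzag_less a x y" "zigzag_less a x w"
    and "next_less_at Ord (f x) (f y) k" "next_less_at Ord (f x) (f w) k'"
  shows "k = k'"
proof -
  obtain q q' where "y = (True, q)" "w = (True, q')" "q < a" "q' < a"
    using assms(1,2) zigzag_less_dest by blast
  then show ?thesis
    using next_less_at_common_lower[OF assms(3,4)] not_next_less_same_side by blast
qed

lemma index_common_upper: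
  assumes "zigzag_less a y x" "zigzag_less a w x"
    and "next_less_at Ord (f y) (f x) k" "next_less_at Ord (f w) (f x) k'"
  shows "k = k'"
proof -
  obtain p p' q where "y = (False, p)" "w = (False, p')" "x = (True, q)" "p \<le> q" "p' \<le> q" "q < a"
    using assms(1,2) zigzag_less_dest by (metis prod.inject)
  then show ?thesis
    using next_less_at_common_upper[OF assms(3,4)] not_next_less_same_side
    by (metis order.strict_trans1)
qed

definition least :: 'i where "least = (LEAST t. t < a)"

lemma least_less: "least < a"
  unfolding least_def using nonempty by (rule LeastI_ex)

lemma least_le: "t < a \<Longrightarrow> least \<le> t"
  unfolding least_def by (rule Least_le)

definition k\<^sub>0 :: 'k where
  "k\<^sub>0 = (SOME k. next_less_at Ord (f (False, least)) (f (True, least)) k)"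

lemma next_less_at_least: "next_less_at Ord (f (False, least)) (f (True, least)) k\<^sub>0"
proof -
  obtain k where "next_less_at Ord (f (False, least)) (f (True, least)) k"
    using next_less_at_if_less[OF zigzag_less_diag[OF least_less]] .
  then show ?thesis unfolding k\<^sub>0_def by (rule someI)
qed

definition on_stem :: "bool \<times> 'i \<Rightarrow> bool" where
  "on_stem x \<longleftrightarrow> same_prefix k\<^sub>0 (f (False, least)) (f x)"

lemma diag_index: "t < a \<Longrightarrow> on_stem (False, t) \<and> next_less_at Ord (f (False, t)) (f (True, t)) k\<^sub>0"
proof (induction t rule: less_induct)
  case (less t)
  show ?case
  proof (cases "t = least")
    case True
    then show ?thesis using next_less_at_least same_prefix_if_next_less_at[OF next_less_at_least]
      unfolding on_stem_def same_prefix_def by simp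
  next
    case False
    with least_le less.prems have "least < t" by (simp add: order.not_eq_order_implies_strict)
    then obtain p where p: "p < t" "zigzag_less a (False, p) (True, t)"
      using zigzag_less_lower_neighbour less.prems by blast
    have IH: "on_stem (False, p)" "next_less_at Ord (f (False, p)) (f (True, p)) k\<^sub>0"
      using less.IH p(1) less.prems by auto
    obtain k where k: "next_less_at Ord (f (False, p)) (f (True, t)) k"
      using next_less_at_if_less[OF p(2)] .
    have "k = k\<^sub>0"
      using index_common_lower[OF p(2) zigzag_less_diag k IH(2)] p less.prems by simp
    with k have edge: "next_less_at Ord (f (False, p)) (f (True, t)) k\<^sub>0" by simp
    obtain k' where k': "next_less_at Ord (f (False, t)) (f (True, t)) k'"
      using next_less_at_if_less[OF zigzag_less_diag[OF less.prems]] .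
    have "k' = k\<^sub>0"
      using index_common_upper[OF zigzag_less_diag[OF less.prems] p(2) k' edge] .
    with k' have diag: "next_less_at Ord (f (False, t)) (f (True, t)) k\<^sub>0" by simp
    have "same_prefix k\<^sub>0 (f (False, least)) (f (True, t))"
      using IH(1) edge same_prefix_if_next_less_at same_prefix_trans unfolding on_stem_def by blast
    then have "on_stem (False, t)"
      using same_prefix_sym[OF same_prefix_if_next_less_at[OF diag]] same_prefix_trans
      unfolding on_stem_def by blast
    with diag show ?thesis by blast
  qed
qed

lemma edge_index:
  assumes "zigzag_less a x y" shows "next_less_at Ord (f x) (f y) k\<^sub>0"
proof -
  obtain p q where pq: "x = (False, p)" "y = (True, q)" "q < a"
    using zigzag_less_dest[OF assms] by blast
  obtain k where k: "next_less_at Ord (f (False, p)) (f (True, q)) k"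
    using next_less_at_if_less assms unfolding pq .
  have "k = k\<^sub>0"
    using index_common_upper[OF assms[unfolded pq] zigzag_less_diag[OF pq(3)] k
      conjunct2[OF diag_index[OF pq(3)]]] .
  with k pq show ?thesis by simp
qed

lemma on_stem: "x \<in> zigzag_dom a \<Longrightarrow> on_stem x"
proof -
  assume "x \<in> zigzag_dom a"
  then obtain b t where x: "x = (b, t)" and t: "t < a" unfolding zigzag_dom_iff by (cases x) auto
  have "on_stem (False, t)" and "same_prefix k\<^sub>0 (f (False, t)) (f (True, t))"
    using diag_index[OF t] same_prefix_if_next_less_at by blast+
  then show ?thesis
    using x same_prefix_trans[of k\<^sub>0 "f (False, least)"] unfolding on_stem_def by (cases b) simp_all
qed

lemma same_letter_same_upper:
  assumes "zigzag_less a z y" "w \<in> zigzag_dom a" "snd (f w) k\<^sub>0 = snd (f z) k\<^sub>0"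
  shows "zigzag_less a w y"
proof -
  have z: "z \<in> zigzag_dom a" and y: "y \<in> zigzag_dom a"
    using zigzag_less_dest[OF assms(1)] unfolding zigzag_dom_iff by auto
  have "same_prefix k\<^sub>0 (f z) (f w)"
    using on_stem[OF z] on_stem[OF assms(2)] unfolding on_stem_def same_prefix_def by simp
  then have "next_less_at Ord (f w) (f y) k\<^sub>0"
    using next_less_at_replace_left[OF edge_index[OF assms(1)]] assms(3) by blast
  then show ?thesis using less_iff_next_less_at assms(2) y by blast
qed

lemma same_letter_same_lower:
  assumes "zigzag_less a y z" "w \<in> zigzag_dom a" "snd (f w) k\<^sub>0 = snd (f z) k\<^sub>0"
  shows "zigzag_less a y w"
proof -
  have z: "z \<in> zigzag_dom a" and y: "y \<in> zigzag_dom a"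
    using zigzag_less_dest[OF assms(1)] unfolding zigzag_dom_iff by (auto dest: order.strict_trans1)
  have "same_prefix k\<^sub>0 (f z) (f w)"
    using on_stem[OF z] on_stem[OF assms(2)] unfolding on_stem_def same_prefix_def by simp
  then have "next_less_at Ord (f y) (f w) k\<^sub>0"
    using next_less_at_replace_right[OF edge_index[OF assms(1)]] assms(3) by blast
  then show ?thesis using less_iff_next_less_at assms(2) y by blast
qed

lemma inj_letter: "inj_on (\<lambda>z. snd (f z) k\<^sub>0) (zigzag_dom a)"
proof (rule inj_onI)
  fix z w assume z: "z \<in> zigzag_dom a" and w: "w \<in> zigzag_dom a"
    and eq: "snd (f z) k\<^sub>0 = snd (f w) k\<^sub>0"
  obtain b t where zt: "z = (b, t)" and t: "t < a" using z unfolding zigzag_dom_iff by (cases z) auto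
  show "z = w"
  proof (cases b)
    case False
    have "zigzag_less a w (True, t)"
      using same_letter_same_upper[OF zigzag_less_diag[OF t] w] eq zt False by simp
    then obtain u where wu: "w = (False, u)" "u \<le> t"
      using zigzag_less_dest by blast
    with t have "zigzag_less a z (True, u)"
      using same_letter_same_upper[OF zigzag_less_diag z] eq by simp
    then have "t \<le> u" using zigzag_less_dest zt by blast
    with wu zt False show ?thesis by simp
  next
    case True
    have "zigzag_less a (False, t) w"
      using same_letter_same_lower[OF zigzag_less_diag[OF t] w] eq zt True by simp
    then obtain u where wu: "w = (True, u)" "t \<le> u" "u < a"
      using zigzag_less_dest by blast
    then have "zigzag_less a (False, u) z"
      using same_letter_same_lower[OF zigzag_less_diag[OF wu(3)] z] eq by simp
    then have "u \<le> t" using zigzag_less_dest zt by blast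
    with wu zt True show ?thesis by simp
  qed
qed

lemma k\<^sub>0_less_j: "k\<^sub>0 < j"
proof -
  have "(False, least) \<in> zigzag_dom a" by (simp add: zigzag_dom_iff least_less)
  then have "f (False, least) \<in> next_dom i j D" using rep unfolding questionable_rep_def by auto
  then have "fst (f (False, least)) < j" unfolding next_dom_def is_word_def by auto
  with next_less_at_least show ?thesis unfolding next_less_at_def by auto
qed

lemma letter_in_D: "z \<in> zigzag_dom a \<Longrightarrow> snd (f z) k\<^sub>0 \<in> D k\<^sub>0"
proof -
  assume z: "z \<in> zigzag_dom a"
  then have "f z \<in> next_dom i j D" using rep unfolding questionable_rep_def by auto
  moreover have "k\<^sub>0 < fst (f z)" using on_stem[OF z] unfolding on_stem_def same_prefix_def by simp
  ultimately show ?thesis unfolding next_dom_def is_word_def by auto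
qed

lemma width: "width_at_least j D (zigzag_dom a)"
proof -
  have "ordLeq2 (card_of (zigzag_dom a)) (card_of (D k\<^sub>0))"
    using card_of_ordLeq inj_letter letter_in_D by blast
  then show ?thesis
    unfolding width_at_least_def using k\<^sub>0_less_j ordLess_ordLeq_trans by blast
qed

end

theorem lemma7p1:
  fixes a :: "'i::wellorder"
    and i j :: "'k::wellorder"
    and D :: "'k \<Rightarrow> 'a set"
    and Ord :: "'k \<Rightarrow> 'a rel"
    and f :: "bool \<times> 'i \<Rightarrow> 'k \<times> ('k \<Rightarrow> 'a)"
  assumes "\<exists>m. m < a"
    and "questionable_rep (zigzag_dom a) (zigzag_less a) i j D Ord f"
  shows "width_at_least j D (zigzag_dom a)"
proof -
  interpret zigzag_rep a i j D Ord f using assms by unfold_locales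
  show ?thesis by (rule width)
qed

end
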